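(* Consider Algorithm MWHVC (described in the context) run on a hypergraph $G=(V,E)$ of rank $f$ with nonnegative vertex weights $w$, with parameters $\varepsilon\in(0,1]$, $\beta=\varepsilon/(f+\varepsilon)$ and multiplier $\alpha>1$. For every $i\ge 0$, the values $\delta_i(e)$ form a feasible edge packing, i.e. $\sum_{e\in E(v)}\delta_i(e)\le w(v)$ for every vertex $v\in V$, and $\delta_i(e)\ge 0$ for every hyperedge $e\in E$.
   Context: Let $G=(V,E)$ be a hypergraph: each hyperedge is a nonempty subset of $V$ of size at most $f$ (rank $f$). Vertices have nonnegative weights $w(v)$. For $v\in V$, $E(v)=\{e\in E: v\in e\}$; $\Delta=\max_v |E(v)|\ge 3$. A hyperedge $e$ is covered by $C\subseteq V$ if $e\cap C\neq\emptyset$. The computation is distributed in synchronous rounds on the bipartite network with node set $V\cup E$ and a link between $v$ and $e$ iff $v\in e$. Parameters: $\varepsilon\in(0,1]$, $\beta=\varepsilon/(f+\varepsilon)$, and a multiplier $\alpha>1$. Algorithm MWHVC: Initialize $C\gets\emptyset$ and $E'(v)\gets E(v)$ for every $v$. Iteration $0$: every hyperedge $e$ sets $\mathrm{deal}_0(e)=\beta\cdot\min_{v\in e} w(v)/|E(v)|$ and $\delta_0(e)=\mathrm{deal}_0(e)$. For $i=1,2,\dots$: (a) every vertex $v\notin C$ (not terminated) checks whether $\sum_{e\in E(v)}\delta_{i-1}(e)\ge(1-\beta)w(v)$; if so, $v$ joins $C$, tells every $e\in E'(v)$ that $e$ is covered, and terminates. (b) Every uncovered hyperedge that receives such a message becomes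 covered, informs all its vertices, and terminates. (c) Every vertex $v\notin C$ that is told $e$ is covered sets $E'(v)\gets E'(v)\setminus\{e\}$; if $E'(v)=\emptyset$, $v$ terminates without joining $C$. (d) Every vertex $v\notin C$ sends "raise" to all $e\in E'(v)$ if $\sum_{e\in E'(v)}\mathrm{deal}_{i-1}(e)\le(\beta/\alpha)w(v)$, and otherwise sends "stuck" to all $e\in E'(v)$. (e) Every uncovered hyperedge $e$ sets $\mathrm{deal}_i(e)=\mathrm{deal}_{i-1}(e)$ if it received some "stuck" message, and $\mathrm{deal}_i(e)=\alpha\cdot\mathrm{deal}_{i-1}(e)$ otherwise, and $\delta_i(e)=\delta_{i-1}(e)+\mathrm{deal}_i(e)$. If $e$ becomes covered in iteration $j$, then by convention $\delta_i(e)=\delta_{j-1}(e)$ for all $i\ge j$. *)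

theory Defs
  imports Complex_Main
begin

text \<open>Hypergraph: vertex set V, hyperedges E (a set of vertex sets).
  inc E v is E(v), the set of hyperedges containing v.\<close>

definition inc :: "'v set set \<Rightarrow> 'v \<Rightarrow> 'v set set" where
  "inc E v = {e \<in> E. v \<in> e}"

record 'v mwstate =
  coverC     :: "'v set"
  terminated :: "'v set"
  Eprime     :: "'v \<Rightarrow> 'v set set"
  covered    :: "'v set set"
  deal       :: "'v set \<Rightarrow> real"
  delta      :: "'v set \<Rightarrow> real"

definition mw_init :: "'v set set \<Rightarrow> ('v \<Rightarrow> real) \<Rightarrow> real \<Rightarrow> 'v mwstate" where
  "mw_init E w \<beta> =
     (let d = (\<lambda>e. \<beta> * Min ((\<lambda>v. w v / real (card (inc E v))) ` e)) in
     \<lparr> coverC = {}, terminated = {}, Eprime = inc E, covered = {},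
       deal = d, delta = d \<rparr>)"

definition mw_step :: "'v set \<Rightarrow> 'v set set \<Rightarrow> ('v \<Rightarrow> real) \<Rightarrow> real \<Rightarrow> real
                        \<Rightarrow> 'v mwstate \<Rightarrow> 'v mwstate" where
  "mw_step V E w \<beta> \<alpha> s =
    (let
       \<comment> \<open>(a) vertices joining C\<close>
       J = {v \<in> V. v \<notin> terminated s \<and>
                  (\<Sum>e\<in>inc E v. delta s e) \<ge> (1 - \<beta>) * w v};
       C' = coverC s \<union> J;
       \<comment> \<open>(b) newly covered hyperedges\<close>
       NC = {e \<in> E. e \<notin> covered s \<and> (\<exists>v\<in>J. e \<in> Eprime s v)};
       Cov' = covered s \<union> NC;
       \<comment> \<open>(c) update E' of non-terminated vertices not in C\<close>
       Ep' = (\<lambda>v. if v \<notin> terminated s \<and> v \<notin> J then Eprime s v - NC else Eprime s v);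
       T' = terminated s \<union> J \<union> {v \<in> V. v \<notin> terminated s \<and> v \<notin> J \<and> Ep' v = {}};
       \<comment> \<open>(d) active vertices send raise / stuck\<close>
       raise = (\<lambda>v. (\<Sum>e\<in>Ep' v. deal s e) \<le> (\<beta> / \<alpha>) * w v);
       stuck = (\<lambda>e. \<exists>v\<in>V - T'. e \<in> Ep' v \<and> \<not> raise v);
       \<comment> \<open>(e) update deals of uncovered hyperedges; covered ones are frozen\<close>
       deal' = (\<lambda>e. if e \<notin> Cov' \<and> \<not> stuck e then \<alpha> * deal s e else deal s e);
       delta' = (\<lambda>e. if e \<notin> Cov' then delta s e + deal' e else delta s e)
     in \<lparr> coverC = C', terminated = T', Eprime = Ep', covered = Cov',
          deal = deal', delta = delta' \<rparr>)"

definition mw_run :: "'v set \<Rightarrow> 'v set set \<Rightarrow> ('v \<Rightarrow> real) \<Rightarrow> real \<Rightarrow> real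
                       \<Rightarrow> nat \<Rightarrow> 'v mwstate" where
  "mw_run V E w \<beta> \<alpha> i = (mw_step V E w \<beta> \<alpha> ^^ i) (mw_init E w \<beta>)"

end

theory Submission
  imports Defs
begin

text \<open>The packing constraint at v can only be threatened while v is active. An active vertex
  that does not join C in step (a) has \<open>\<Sum>e\<in>E(v). \<delta>(e) < (1 - \<beta>) w(v)\<close>, and in step (e)
  only its uncovered edges E'(v) gain, each by its new deal. Hence it suffices to maintain
  \<open>\<Sum>e\<in>E'(v). deal(e) \<le> \<beta> w(v)\<close> for active v: initially \<open>deal\<^sub>0(e) \<le> \<beta> w(v) / |E(v)|\<close>, and a
  deal is multiplied by \<alpha> only if every active endpoint sent "raise", i.e. had
  \<open>\<Sum>e\<in>E'(v). deal(e) \<le> \<beta> w(v) / \<alpha>\<close>. Once v terminates, all its edges are covered and their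
  \<delta> values are frozen.\<close>

definition mw_inv :: "'v set \<Rightarrow> 'v set set \<Rightarrow> ('v \<Rightarrow> real) \<Rightarrow> real \<Rightarrow> 'v mwstate \<Rightarrow> bool" where
  "mw_inv V E w \<beta> s \<longleftrightarrow>
    (\<forall>e\<in>E. 0 \<le> deal s e \<and> 0 \<le> delta s e) \<and>
    (\<forall>v\<in>V. (\<Sum>e\<in>inc E v. delta s e) \<le> w v) \<and>
    (\<forall>v\<in>V. v \<in> terminated s \<longrightarrow> inc E v \<subseteq> covered s) \<and>
    (\<forall>v\<in>V - terminated s.
       Eprime s v = inc E v - covered s \<and> (\<Sum>e\<in>Eprime s v. deal s e) \<le> \<beta> * w v)"

lemma finite_inc: "finite E \<Longrightarrow> finite (inc E v)"
  unfolding inc_def by simp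

lemma mw_init_simps [simp]:
  "terminated (mw_init E w \<beta>) = {}"
  "covered (mw_init E w \<beta>) = {}"
  "Eprime (mw_init E w \<beta>) = inc E"
  "delta (mw_init E w \<beta>) = deal (mw_init E w \<beta>)"
  by (simp_all add: mw_init_def Let_def)

lemma mw_init_deal_nonneg:
  assumes "e \<noteq> {}" "finite e" "\<forall>v\<in>e. 0 \<le> w v" "0 \<le> \<beta>"
  shows "0 \<le> deal (mw_init E w \<beta>) e"
  using assms unfolding mw_init_def Let_def
  by (simp add: Min_ge_iff divide_nonneg_nonneg)

lemma mw_init_deal_le:
  assumes "e \<in> inc E v" "finite e" "0 \<le> \<beta>"
  shows "deal (mw_init E w \<beta>) e \<le> \<beta> * (w v / card (inc E v))"
proof -
  have "deal (mw_init E w \<beta>) e = \<beta> * Min ((\<lambda>u. w u / card (inc E u)) ` e)"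
    by (simp add: mw_init_def Let_def)
  also have "\<dots> \<le> \<beta> * (w v / card (inc E v))"
    using assms unfolding inc_def by (intro mult_left_mono Min_le) auto
  finally show ?thesis .
qed

lemma sum_mw_init_deal_le:
  assumes "finite E" "\<forall>e\<in>E. finite e" "0 \<le> \<beta>" "0 \<le> w v"
  shows "(\<Sum>e\<in>inc E v. deal (mw_init E w \<beta>) e) \<le> \<beta> * w v"
proof (cases "inc E v = {}")
  case True
  then show ?thesis using assms by simp
next
  case False
  then have "0 < card (inc E v)"
    using finite_inc[OF assms(1)] by (simp add: card_gt_0_iff)
  have "finite e" if "e \<in> inc E v" for e
    using that assms(2) unfolding inc_def by blast
  then have "(\<Sum>e\<in>inc E v. deal (mw_init E w \<beta>) e) \<le> (\<Sum>e\<in>inc E v. \<beta> * (w v / card (inc E v)))"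
    using assms(3) by (intro sum_mono mw_init_deal_le)
  also have "\<dots> = \<beta> * w v"
    using \<open>0 < card (inc E v)\<close> by simp
  finally show ?thesis .
qed

lemma mw_inv_mw_init:
  assumes "finite E" "\<forall>e\<in>E. e \<noteq> {} \<and> finite e \<and> e \<subseteq> V" "\<forall>v\<in>V. 0 \<le> w v"
    and "0 \<le> \<beta>" "\<beta> \<le> 1"
  shows "mw_inv V E w \<beta> (mw_init E w \<beta>)"
proof -
  have deal_sum: "(\<Sum>e\<in>inc E v. deal (mw_init E w \<beta>) e) \<le> \<beta> * w v" if "v \<in> V" for v
    using assms that by (intro sum_mw_init_deal_le) auto
  have "(\<Sum>e\<in>inc E v. delta (mw_init E w \<beta>) e) \<le> w v" if "v \<in> V" for v
  proof -
    have "\<beta> * w v \<le> w v"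
      using assms that by (simp add: mult_left_le_one_le)
    then show ?thesis
      using deal_sum[OF that] by simp
  qed
  moreover have "0 \<le> deal (mw_init E w \<beta>) e" if "e \<in> E" for e
    using assms that by (intro mw_init_deal_nonneg) auto
  ultimately show ?thesis
    using deal_sum unfolding mw_inv_def by simp
qed

locale mw_iteration =
  fixes V :: "'v set" and E :: "'v set set" and w :: "'v \<Rightarrow> real" and \<beta> \<alpha> :: real
    and s :: "'v mwstate"
  assumes finite_E: "finite E" and alpha_gt_1: "1 < \<alpha>" and inv: "mw_inv V E w \<beta> s"
begin

definition joining :: "'v set" where
  "joining = {v \<in> V. v \<notin> terminated s \<and> (\<Sum>e\<in>inc E v. delta s e) \<ge> (1 - \<beta>) * w v}"

definition newly_covered :: "'v set set" where
  "newly_covered = {e \<in> E. e \<notin> covered s \<and> (\<exists>v\<in>joining. e \<in> Eprime s v)}"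

definition covered' :: "'v set set" where
  "covered' = covered s \<union> newly_covered"

definition Eprime' :: "'v \<Rightarrow> 'v set set" where
  "Eprime' v = (if v \<notin> terminated s \<and> v \<notin> joining then Eprime s v - newly_covered else Eprime s v)"

definition terminated' :: "'v set" where
  "terminated' = terminated s \<union> joining \<union>
     {v \<in> V. v \<notin> terminated s \<and> v \<notin> joining \<and> Eprime' v = {}}"

definition raises :: "'v \<Rightarrow> bool" where
  "raises v \<longleftrightarrow> (\<Sum>e\<in>Eprime' v. deal s e) \<le> (\<beta> / \<alpha>) * w v"

definition stuck :: "'v set \<Rightarrow> bool" where
  "stuck e \<longleftrightarrow> (\<exists>v\<in>V - terminated'. e \<in> Eprime' v \<and> \<not> raises v)"

definition deal' :: "'v set \<Rightarrow> real" where
  "deal' e = (if e \<notin> covered' \<and> \<not> stuck e then \<alpha> * deal s e else deal s e)"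

definition delta' :: "'v set \<Rightarrow> real" where
  "delta' e = (if e \<notin> covered' then delta s e + deal' e else delta s e)"

lemma mw_step_eq:
  "mw_step V E w \<beta> \<alpha> s =
     \<lparr> coverC = coverC s \<union> joining, terminated = terminated', Eprime = Eprime',
       covered = covered', deal = deal', delta = delta' \<rparr>"
  unfolding mw_step_def Let_def joining_def newly_covered_def covered'_def Eprime'_def
    terminated'_def raises_def stuck_def deal'_def delta'_def
  by simp

lemma nonneg: "e \<in> E \<Longrightarrow> 0 \<le> deal s e \<and> 0 \<le> delta s e"
  and packing: "v \<in> V \<Longrightarrow> (\<Sum>e\<in>inc E v. delta s e) \<le> w v"
  and terminated_covered: "v \<in> V \<Longrightarrow> v \<in> terminated s \<Longrightarrow> inc E v \<subseteq> covered s"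
  and active_Eprime: "v \<in> V - terminated s \<Longrightarrow> Eprime s v = inc E v - covered s"
  and active_deal_sum: "v \<in> V - terminated s \<Longrightarrow> (\<Sum>e\<in>Eprime s v. deal s e) \<le> \<beta> * w v"
  using inv unfolding mw_inv_def by blast+

lemma active'_iff: "v \<in> V - terminated' \<longleftrightarrow> v \<in> V - terminated s \<and> v \<notin> joining \<and> Eprime' v \<noteq> {}"
  unfolding terminated'_def by auto

lemma deal'_delta'_nonneg: "e \<in> E \<Longrightarrow> 0 \<le> deal' e \<and> 0 \<le> delta' e"
  using nonneg alpha_gt_1 unfolding deal'_def delta'_def by auto

lemma Eprime'_active:
  assumes "v \<in> V - terminated'"
  shows "Eprime' v = inc E v - covered'"
  using assms active_Eprime unfolding active'_iff Eprime'_def covered'_def by auto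

lemma terminated'_covered:
  assumes "v \<in> V" "v \<in> terminated'"
  shows "inc E v \<subseteq> covered'"
proof -
  consider "v \<in> terminated s" | "v \<in> joining" | "v \<in> V - terminated s" "v \<notin> joining" "Eprime' v = {}"
    using assms unfolding terminated'_def by auto
  then show ?thesis
  proof cases
    case 1
    then show ?thesis
      using terminated_covered[OF assms(1)] unfolding covered'_def by blast
  next
    case 2
    then have "v \<in> V - terminated s" by (simp add: joining_def)
    have "inc E v - covered s \<subseteq> newly_covered"
    proof
      fix e assume e: "e \<in> inc E v - covered s"
      then have "e \<in> Eprime s v"
        using active_Eprime[OF \<open>v \<in> V - terminated s\<close>] by blast
      moreover have "e \<in> E" using e by (simp add: inc_def)
      ultimately show "e \<in> newly_covered"
        using e 2 by (simp add: newly_covered_def) blast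
    qed
    then show ?thesis unfolding covered'_def by blast
  next
    case 3
    then have "Eprime s v \<subseteq> newly_covered"
      unfolding Eprime'_def by simp
    then show ?thesis
      using active_Eprime[OF 3(1)] unfolding covered'_def by blast
  qed
qed

lemma active_deal'_sum:
  assumes "v \<in> V - terminated'"
  shows "(\<Sum>e\<in>Eprime' v. deal' e) \<le> \<beta> * w v"
proof (cases "raises v")
  case True
  have "(\<Sum>e\<in>Eprime' v. deal' e) \<le> (\<Sum>e\<in>Eprime' v. \<alpha> * deal s e)"
  proof (rule sum_mono)
    fix e assume "e \<in> Eprime' v"
    then have "e \<in> E" using Eprime'_active[OF assms] by (simp add: inc_def)
    then have "0 \<le> deal s e" using nonneg by blast
    then show "deal' e \<le> \<alpha> * deal s e"
      using alpha_gt_1 unfolding deal'_def by (auto simp: mult_le_cancel_right1)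
  qed
  also have "\<dots> = \<alpha> * (\<Sum>e\<in>Eprime' v. deal s e)"
    by (simp add: sum_distrib_left)
  also have "\<dots> \<le> \<alpha> * ((\<beta> / \<alpha>) * w v)"
    using True alpha_gt_1 unfolding raises_def by (intro mult_left_mono) auto
  also have "\<dots> = \<beta> * w v"
    using alpha_gt_1 by simp
  finally show ?thesis .
next
  case False
  have old: "v \<in> V - terminated s" "v \<notin> joining"
    using assms unfolding active'_iff by auto
  have "(\<Sum>e\<in>Eprime' v. deal' e) = (\<Sum>e\<in>Eprime' v. deal s e)"
    using assms False unfolding deal'_def stuck_def by (intro sum.cong) auto
  also have "\<dots> \<le> (\<Sum>e\<in>Eprime s v. deal s e)"
  proof (rule sum_mono2)
    show "finite (Eprime s v)"
      using old active_Eprime finite_inc[OF finite_E] by simp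
    show "Eprime' v \<subseteq> Eprime s v"
      using old unfolding Eprime'_def by auto
    show "0 \<le> deal s e" if "e \<in> Eprime s v - Eprime' v" for e
    proof -
      have "e \<in> E" using that active_Eprime[OF old(1)] by (simp add: inc_def)
      then show ?thesis using nonneg by blast
    qed
  qed
  also have "\<dots> \<le> \<beta> * w v"
    using old active_deal_sum by blast
  finally show ?thesis .
qed

lemma packing':
  assumes "v \<in> V"
  shows "(\<Sum>e\<in>inc E v. delta' e) \<le> w v"
proof (cases "v \<in> terminated'")
  case True
  have "(\<Sum>e\<in>inc E v. delta' e) = (\<Sum>e\<in>inc E v. delta s e)"
    using terminated'_covered[OF assms True] unfolding delta'_def by (intro sum.cong) auto
  then show ?thesis using packing[OF assms] by simp
next
  case False
  then have active: "v \<in> V - terminated'" using assms by blast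
  then have "v \<in> V - terminated s" "v \<notin> joining"
    unfolding active'_iff by auto
  then have below: "(\<Sum>e\<in>inc E v. delta s e) < (1 - \<beta>) * w v"
    unfolding joining_def by auto
  have "(\<Sum>e\<in>inc E v. delta' e) = (\<Sum>e\<in>inc E v. delta s e + (if e \<in> Eprime' v then deal' e else 0))"
    using Eprime'_active[OF active] unfolding delta'_def by (intro sum.cong) auto
  also have "\<dots> = (\<Sum>e\<in>inc E v. delta s e) + (\<Sum>e\<in>Eprime' v. deal' e)"
  proof -
    have "Eprime' v \<subseteq> inc E v"
      using Eprime'_active[OF active] by blast
    then show ?thesis
      using finite_inc[OF finite_E] by (simp add: sum.distrib sum.inter_restrict[symmetric] Int_absorb1)
  qed
  also have "\<dots> \<le> w v"
    using below active_deal'_sum[OF active] by (simp add: algebra_simps)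
  finally show ?thesis .
qed

lemma mw_inv_mw_step: "mw_inv V E w \<beta> (mw_step V E w \<beta> \<alpha> s)"
  unfolding mw_inv_def mw_step_eq mwstate.simps
  using deal'_delta'_nonneg packing' terminated'_covered Eprime'_active active_deal'_sum
  by blast

end

lemma mw_run_Suc: "mw_run V E w \<beta> \<alpha> (Suc i) = mw_step V E w \<beta> \<alpha> (mw_run V E w \<beta> \<alpha> i)"
  unfolding mw_run_def by simp

lemma mw_inv_mw_run:
  assumes "finite E" "\<forall>e\<in>E. e \<noteq> {} \<and> finite e \<and> e \<subseteq> V" "\<forall>v\<in>V. 0 \<le> w v"
    and "0 \<le> \<beta>" "\<beta> \<le> 1" "1 < \<alpha>"
  shows "mw_inv V E w \<beta> (mw_run V E w \<beta> \<alpha> i)"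
proof (induction i)
  case 0
  show ?case
    unfolding mw_run_def using mw_inv_mw_init[OF assms(1-5)] by simp
next
  case (Suc i)
  interpret mw_iteration V E w \<beta> \<alpha> "mw_run V E w \<beta> \<alpha> i"
    using assms(1,6) Suc.IH by unfold_locales
  show ?case
    unfolding mw_run_Suc by (rule mw_inv_mw_step)
qed

theorem mainTheorem2:
  fixes V :: "'v set" and E :: "'v set set" and w :: "'v \<Rightarrow> real"
    and f :: nat and \<epsilon> \<alpha> \<beta> :: real
  assumes "finite V"
    and "\<forall>e\<in>E. e \<noteq> {} \<and> e \<subseteq> V \<and> card e \<le> f"
    and "\<forall>v\<in>V. 0 \<le> w v"
    and "3 \<le> Max ((\<lambda>v. card (inc E v)) ` V)"
    and "0 < \<epsilon>" and "\<epsilon> \<le> 1"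
    and "\<beta> = \<epsilon> / (real f + \<epsilon>)"
    and "1 < \<alpha>"
  shows "\<forall>i::nat.
           (\<forall>v\<in>V. (\<Sum>e\<in>inc E v. delta (mw_run V E w \<beta> \<alpha> i) e) \<le> w v) \<and>
           (\<forall>e\<in>E. 0 \<le> delta (mw_run V E w \<beta> \<alpha> i) e)"
proof
  fix i
  \<comment> \<open>Feasibility only needs \<open>0 \<le> \<beta> \<le> 1\<close>; the bounds on \<Delta> and on the rank matter for the
    approximation ratio and the running time.\<close>
  have "finite E"
    using assms(1,2) by (meson Pow_iff finite_Pow_iff finite_subset subsetI)
  moreover have "\<forall>e\<in>E. e \<noteq> {} \<and> finite e \<and> e \<subseteq> V"
    using assms(1,2) finite_subset by blast
  moreover have "0 \<le> \<beta>" "\<beta> \<le> 1"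
    using assms(5,7) by simp_all
  ultimately have "mw_inv V E w \<beta> (mw_run V E w \<beta> \<alpha> i)"
    using assms(3,8) by (intro mw_inv_mw_run)
  then show "(\<forall>v\<in>V. (\<Sum>e\<in>inc E v. delta (mw_run V E w \<beta> \<alpha> i) e) \<le> w v) \<and>
             (\<forall>e\<in>E. 0 \<le> delta (mw_run V E w \<beta> \<alpha> i) e)"
    unfolding mw_inv_def by blast
qed

end
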